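(* Let $A,B\in\mathbb{R}_+^{m\times n}$. Then: (1) $\hat\rho(A,B)\le\rho(A,B)$. (2) Let $\mathbf{y}$ be weakly optimal. If $A\mathbf{y}>\mathbf{0}$ or $B\mathbf{y}>\mathbf{0}$ (all coordinates positive), then $\rho(A,B)=\hat\rho(A,B)$ and $\mathbf{y}$ is optimal. (3) If $A>0$ or $B>0$ (all entries positive), then $\rho(A,B)=\hat\rho(A,B)$ and every weakly optimal vector is optimal. (4) If $B_l\in\mathbb{R}^{m\times n}$, $l\in\mathbb{N}$, have all entries positive and $\lim_{l\to\infty}B_l=B$, then $\lim_{l\to\infty}\rho(A,B_l)=\hat\rho(A,B)$ (in $[0,\infty]$). (5) If $A_l\in\mathbb{R}^{m\times n}$, $l\in\mathbb{N}$, have all entries positive, $\lim_{l\to\infty}A_l=A$, and $B$ has no zero row, then $\lim_{l\to\infty}\rho(A_l,B)=\rho(A,B)$.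
   Context: $[m]=\{1,\dots,m\}$. For $A,B\in\mathbb{R}_+^{m\times n}$ (entrywise nonnegative real matrices) and $\mathbf{x}\in\mathbb{R}^n_+\setminus\{\mathbf{0}\}$, set $r(A,B,\mathbf{x})=\max_{i\in[m]}\frac{(A\mathbf{x})_i}{(B\mathbf{x})_i}\in[0,\infty]$ with the conventions $\frac00=0$ and $\frac c0=\infty$ for $c>0$; equivalently $r(A,B,\mathbf{x})=\inf\{t\ge 0: A\mathbf{x}\le tB\mathbf{x}\}$ (with $\inf\emptyset=\infty$). The Collatz–Wielandt quotient is $\rho(A,B)=\inf\{r(A,B,\mathbf{x}):\mathbf{x}>\mathbf{0}\}$ (infimum over vectors with all coordinates positive) and the weak Collatz–Wielandt quotient is $\hat\rho(A,B)=\inf\{r(A,B,\mathbf{x}):\mathbf{x}\in\mathbb{R}^n_+\setminus\{\mathbf{0}\}\}$. A vector $\mathbf{y}\in\mathbb{R}^n_+\setminus\{\mathbf{0}\}$ is weakly optimal if $r(A,B,\mathbf{y})=\hat\rho(A,B)$; it is optimal if $r(A,B,\mathbf{y})=\rho(A,B)$ and there is a sequence $\mathbf{y}_k>\mathbf{0}$ with $\mathbf{y}_k\to\mathbf{y}$ and $r(A,B,\mathbf{y}_k)\to\rho(A,B)$. *)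

theory Defs
  imports "HOL-Analysis.Analysis"
begin

definition nonneg_mat :: "real^'n^'m \<Rightarrow> bool" where
  "nonneg_mat A \<longleftrightarrow> (\<forall>i j. A $ i $ j \<ge> 0)"

definition pos_mat :: "real^'n^'m \<Rightarrow> bool" where
  "pos_mat A \<longleftrightarrow> (\<forall>i j. A $ i $ j > 0)"

definition nonneg_vec :: "real^'n \<Rightarrow> bool" where
  "nonneg_vec x \<longleftrightarrow> (\<forall>j. x $ j \<ge> 0)"

definition pos_vec :: "real^'n \<Rightarrow> bool" where
  "pos_vec x \<longleftrightarrow> (\<forall>j. x $ j > 0)"

definition cw_div :: "real \<Rightarrow> real \<Rightarrow> ereal" where
  "cw_div a b = (if b > 0 then ereal (a / b) else if a = 0 then 0 else \<infinity>)"

definition cw_r :: "real^'n^'m \<Rightarrow> real^'n^'m \<Rightarrow> real^'n \<Rightarrow> ereal" where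
  "cw_r A B x = Max (range (\<lambda>i. cw_div ((A *v x) $ i) ((B *v x) $ i)))"

definition cw_rho :: "real^'n^'m \<Rightarrow> real^'n^'m \<Rightarrow> ereal" where
  "cw_rho A B = (INF x \<in> {x. pos_vec x}. cw_r A B x)"

definition cw_rho_hat :: "real^'n^'m \<Rightarrow> real^'n^'m \<Rightarrow> ereal" where
  "cw_rho_hat A B = (INF x \<in> {x. nonneg_vec x \<and> x \<noteq> 0}. cw_r A B x)"

definition weakly_optimal :: "real^'n^'m \<Rightarrow> real^'n^'m \<Rightarrow> real^'n \<Rightarrow> bool" where
  "weakly_optimal A B y \<longleftrightarrow> nonneg_vec y \<and> y \<noteq> 0 \<and> cw_r A B y = cw_rho_hat A B"

definition optimal :: "real^'n^'m \<Rightarrow> real^'n^'m \<Rightarrow> real^'n \<Rightarrow> bool" where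
  "optimal A B y \<longleftrightarrow> nonneg_vec y \<and> y \<noteq> 0 \<and> cw_r A B y = cw_rho A B \<and>
     (\<exists>Y::nat \<Rightarrow> real^'n. (\<forall>k. pos_vec (Y k)) \<and> Y \<longlonglongrightarrow> y \<and>
        (\<lambda>k. cw_r A B (Y k)) \<longlonglongrightarrow> cw_rho A B)"

end

theory Submission
  imports Defs
begin

text \<open>The quotient \<open>cw_r C D x\<close> is lower semicontinuous jointly in \<open>(C, D, x)\<close> and upper
  semicontinuous wherever \<open>D x > 0\<close>. Approximating a nonnegative \<open>x\<close> by positive vectors therefore
  gives \<open>cw_rho C D \<le> cw_r C D x\<close> as soon as \<open>C x > 0\<close> or \<open>D x > 0\<close> (if \<open>D x\<close> has a zero
  entry, \<open>C x > 0\<close> makes the quotient infinite anyway); this yields (1)--(3).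
  For (4), lower semicontinuity together with compactness of the nonnegative part of the unit
  sphere makes \<open>cw_rho_hat\<close> lower semicontinuous, while positivity of \<open>B\<^sub>l\<close> puts every nonzero
  nonnegative vector into the previous situation. For (5), \<open>A\<^sub>l\<close> eventually dominates \<open>c A\<close> for
  every \<open>c < 1\<close>, and without zero rows \<open>B x > 0\<close> for every positive \<open>x\<close>.\<close>

lemma cw_div_nonneg: "a \<ge> 0 \<Longrightarrow> cw_div a b \<ge> 0"
  by (auto simp: cw_div_def)

lemma cw_div_le_ereal_iff:
  assumes "a \<ge> 0" "b \<ge> 0" "t \<ge> 0"
  shows "cw_div a b \<le> ereal t \<longleftrightarrow> a \<le> t * b"
  using assms by (auto simp: cw_div_def field_simps)

lemma cw_div_mono: "0 \<le> a \<Longrightarrow> a \<le> a' \<Longrightarrow> cw_div a b \<le> cw_div a' b"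
  by (auto simp: cw_div_def divide_right_mono)

lemma cw_div_mult_left: "c > 0 \<Longrightarrow> cw_div (c * a) b = ereal c * cw_div a b"
  by (auto simp: cw_div_def)

lemma cw_div_mult_both: "c > 0 \<Longrightarrow> cw_div (c * a) (c * b) = cw_div a b"
  by (auto simp: cw_div_def zero_less_mult_iff)

lemma matrix_vector_mult_nonneg:
  assumes "nonneg_mat C" "nonneg_vec x"
  shows "(C *v x) $ i \<ge> 0"
  using assms unfolding nonneg_mat_def nonneg_vec_def matrix_vector_mult_def
  by (auto intro!: sum_nonneg)

lemma pos_vec_matrix_vector_mult:
  assumes "nonneg_mat C" "nonneg_vec x" "\<And>i. \<exists>j. 0 < C $ i $ j \<and> 0 < x $ j"
  shows "pos_vec (C *v x)"
  unfolding pos_vec_def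
proof
  fix i
  obtain j where "0 < C $ i $ j" "0 < x $ j" using assms(3) by blast
  then show "0 < (C *v x) $ i"
    using assms(1,2) unfolding matrix_vector_mult_def nonneg_mat_def nonneg_vec_def
    by (simp, intro sum_pos2[where i=j]) auto
qed

lemma pos_mat_mult_pos_vec:
  assumes "pos_mat C" "nonneg_vec x" "x \<noteq> 0"
  shows "pos_vec (C *v x)"
proof -
  obtain j where "x $ j \<noteq> 0" using assms(3) by (auto simp: vec_eq_iff)
  then have "0 < x $ j" using assms(2) by (simp add: nonneg_vec_def order_le_neq_trans)
  then show ?thesis
    using assms(1,2) by (auto simp: pos_mat_def nonneg_mat_def less_imp_le
        intro!: pos_vec_matrix_vector_mult)
qed

lemma pos_vec_imp_nonneg_vec: "pos_vec x \<Longrightarrow> nonneg_vec x"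
  unfolding pos_vec_def nonneg_vec_def by (simp add: less_imp_le)

lemma pos_vec_nonzero: "pos_vec x \<Longrightarrow> x \<noteq> 0"
  unfolding pos_vec_def by (metis less_irrefl zero_index)

lemma pos_mat_imp_nonneg_mat: "pos_mat C \<Longrightarrow> nonneg_mat C"
  unfolding pos_mat_def nonneg_mat_def by (simp add: less_imp_le)

lemma cw_div_le_cw_r: "cw_div ((C *v x) $ i) ((D *v x) $ i) \<le> cw_r C D x"
  unfolding cw_r_def by (rule Max_ge) auto

lemma cw_r_nonneg:
  assumes "nonneg_mat C" "nonneg_vec x"
  shows "cw_r C D x \<ge> 0"
  using cw_div_nonneg[OF matrix_vector_mult_nonneg[OF assms]] cw_div_le_cw_r order_trans by blast

lemma cw_r_le_ereal_iff:
  assumes "nonneg_mat C" "nonneg_mat D" "nonneg_vec x" "t \<ge> 0"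
  shows "cw_r C D x \<le> ereal t \<longleftrightarrow> (\<forall>i. (C *v x) $ i \<le> t * (D *v x) $ i)"
  unfolding cw_r_def
  by (subst Max_le_iff) (auto simp: cw_div_le_ereal_iff matrix_vector_mult_nonneg assms)

lemma cw_r_eq_infinity:
  assumes "nonneg_mat D" "nonneg_vec x" "pos_vec (C *v x)" "\<not> pos_vec (D *v x)"
  shows "cw_r C D x = \<infinity>"
proof -
  obtain i where "\<not> (D *v x) $ i > 0" using assms(4) by (auto simp: pos_vec_def)
  then have "(D *v x) $ i = 0" using matrix_vector_mult_nonneg[OF assms(1,2), where i=i] by simp
  moreover have "(C *v x) $ i > 0" using assms(3) by (simp add: pos_vec_def)
  ultimately show ?thesis
    using cw_div_le_cw_r[where C=C and D=D and x=x and i=i] by (simp add: cw_div_def)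
qed

lemma cw_r_scaleR: "c > 0 \<Longrightarrow> cw_r C D (c *\<^sub>R x) = cw_r C D x"
  by (simp add: cw_r_def matrix_vector_mult_scaleR cw_div_mult_both)

lemma cw_r_scaleR_left:
  assumes "c > 0"
  shows "cw_r (c *\<^sub>R C) D x = ereal c * cw_r C D x"
proof -
  have "mono (\<lambda>y::ereal. ereal c * y)"
    using assms by (simp add: mono_def ereal_mult_left_mono)
  then show ?thesis
    unfolding cw_r_def
    by (subst mono_Max_commute)
       (auto simp: image_image assms cw_div_mult_left simp flip: scaleR_matrix_vector_assoc)
qed

lemma cw_r_mono_left:
  assumes "nonneg_mat C" "nonneg_vec x" "\<And>i j. C $ i $ j \<le> C' $ i $ j"
  shows "cw_r C D x \<le> cw_r C' D x"
proof -
  have "(C *v x) $ i \<le> (C' *v x) $ i" for i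
    using assms(2,3) unfolding matrix_vector_mult_def nonneg_vec_def
    by (auto intro!: sum_mono mult_right_mono)
  then have "cw_div ((C *v x) $ i) ((D *v x) $ i) \<le> cw_r C' D x" for i
    using cw_div_mono[OF matrix_vector_mult_nonneg[OF assms(1,2)]] cw_div_le_cw_r order_trans
    by blast
  then show ?thesis unfolding cw_r_def[of C] by (subst Max_le_iff) auto
qed

lemma tendsto_matrix_vector_mult:
  fixes M :: "nat \<Rightarrow> real^'n^'m"
  assumes "M \<longlonglongrightarrow> M0" "X \<longlonglongrightarrow> x0"
  shows "(\<lambda>k. M k *v X k) \<longlonglongrightarrow> M0 *v x0"
  unfolding matrix_vector_mult_def
  by (auto intro!: tendsto_intros assms)

lemma eventually_less_cw_r:
  fixes C D :: "nat \<Rightarrow> real^'n^'m" and X :: "nat \<Rightarrow> real^'n"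
  assumes "\<And>k. nonneg_mat (C k)" "\<And>k. nonneg_mat (D k)" "\<And>k. nonneg_vec (X k)"
    and "nonneg_mat C0" "nonneg_mat D0" "nonneg_vec x"
    and C_lim: "(\<lambda>k. C k *v X k) \<longlonglongrightarrow> C0 *v x" and D_lim: "(\<lambda>k. D k *v X k) \<longlonglongrightarrow> D0 *v x"
    and lo: "lo < cw_r C0 D0 x"
  shows "\<forall>\<^sub>F k in sequentially. lo < cw_r (C k) (D k) (X k)"
proof (cases "lo < 0")
  case True
  then show ?thesis by (intro always_eventually allI less_le_trans[OF True cw_r_nonneg[OF assms(1,3)]])
next
  case False
  obtain t where t: "lo < ereal t" "ereal t < cw_r C0 D0 x" using ereal_dense2[OF lo] by blast
  have "0 < ereal t" using order_le_less_trans[of 0 lo "ereal t"] False t(1) by simp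
  then have "t \<ge> 0" by simp
  moreover have "\<not> cw_r C0 D0 x \<le> ereal t" using t(2) by simp
  ultimately obtain i where neg: "t * (D0 *v x) $ i - (C0 *v x) $ i < 0"
    using cw_r_le_ereal_iff[OF assms(4-6)] by (auto simp: not_le)
  have "(\<lambda>k. t * (D k *v X k) $ i - (C k *v X k) $ i)
      \<longlonglongrightarrow> t * (D0 *v x) $ i - (C0 *v x) $ i"
    by (intro tendsto_intros C_lim D_lim)
  from order_tendstoD(2)[OF this neg] show ?thesis
  proof eventually_elim
    case (elim k)
    then have "ereal t < cw_r (C k) (D k) (X k)"
      using cw_r_le_ereal_iff[OF assms(1-3) \<open>t \<ge> 0\<close>] by (auto simp flip: not_less)
    then show ?case using t(1) by simp
  qed
qed

text \<open>Upper semicontinuity can only fail at a row where the denominator vanishes and the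
  numerator may grow, so that row is controlled by hypothesis.\<close>

lemma eventually_cw_r_less:
  fixes C D :: "nat \<Rightarrow> real^'n^'m" and X :: "nat \<Rightarrow> real^'n"
  assumes "\<And>k. nonneg_mat (C k)" "\<And>k. nonneg_mat (D k)" "\<And>k. nonneg_vec (X k)"
    and "nonneg_mat C0" "nonneg_mat D0" "nonneg_vec x"
    and C_lim: "(\<lambda>k. C k *v X k) \<longlonglongrightarrow> C0 *v x" and D_lim: "(\<lambda>k. D k *v X k) \<longlonglongrightarrow> D0 *v x"
    and zero_rows: "\<And>i. (D0 *v x) $ i = 0 \<Longrightarrow>
      \<forall>\<^sub>F k in sequentially. (C k *v X k) $ i \<le> (C0 *v x) $ i"
    and u: "cw_r C0 D0 x < u"
  shows "\<forall>\<^sub>F k in sequentially. cw_r (C k) (D k) (X k) < u"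
proof -
  obtain t1 where t1: "cw_r C0 D0 x < ereal t1" "ereal t1 < u" using ereal_dense2[OF u] by blast
  obtain t2 where t2: "t1 < t2" "ereal t2 < u" using ereal_dense2[OF t1(2)] by auto
  have "0 < ereal t1" using order_le_less_trans[OF cw_r_nonneg[OF assms(4,6)] t1(1)] .
  then have "t1 \<ge> 0" by simp
  have le_t1: "(C0 *v x) $ i \<le> t1 * (D0 *v x) $ i" for i
    using cw_r_le_ereal_iff[OF assms(4-6) \<open>t1 \<ge> 0\<close>] t1(1) by (simp add: less_imp_le)
  have "\<forall>\<^sub>F k in sequentially. \<forall>i. (C k *v X k) $ i \<le> t2 * (D k *v X k) $ i"
  proof (rule eventually_all_finite)
    fix i
    show "\<forall>\<^sub>F k in sequentially. (C k *v X k) $ i \<le> t2 * (D k *v X k) $ i"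
    proof (cases "(D0 *v x) $ i = 0")
      case True
      have D_nonneg: "0 \<le> t2 * (D k *v X k) $ i" for k
        using \<open>t1 \<ge> 0\<close> t2(1) matrix_vector_mult_nonneg[OF assms(2,3)] by simp
      have "(C0 *v x) $ i \<le> 0" using le_t1[of i] True by simp
      show ?thesis using zero_rows[OF True]
        by (rule eventually_mono) (meson D_nonneg order_trans \<open>(C0 *v x) $ i \<le> 0\<close>)
    next
      case False
      then have neg: "(C0 *v x) $ i - t2 * (D0 *v x) $ i < 0"
        using le_t1[of i] t2(1) matrix_vector_mult_nonneg[OF assms(5,6), of i]
        by (smt (verit) mult_strict_right_mono)
      have "(\<lambda>k. (C k *v X k) $ i - t2 * (D k *v X k) $ i)
          \<longlonglongrightarrow> (C0 *v x) $ i - t2 * (D0 *v x) $ i"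
        by (intro tendsto_intros C_lim D_lim)
      from order_tendstoD(2)[OF this neg] show ?thesis
        by (rule eventually_mono) simp
    qed
  qed
  then show ?thesis
  proof eventually_elim
    case (elim k)
    then have "cw_r (C k) (D k) (X k) \<le> ereal t2"
      using cw_r_le_ereal_iff[OF assms(1-3)] \<open>t1 \<ge> 0\<close> t2(1) by simp
    then show ?case using t2(2) by simp
  qed
qed

lemma tendsto_cw_r:
  fixes C D :: "nat \<Rightarrow> real^'n^'m" and X :: "nat \<Rightarrow> real^'n"
  assumes "\<And>k. nonneg_mat (C k)" "\<And>k. nonneg_mat (D k)" "\<And>k. nonneg_vec (X k)"
    and "nonneg_mat C0" "nonneg_mat D0" "nonneg_vec x"
    and "(\<lambda>k. C k *v X k) \<longlonglongrightarrow> C0 *v x" "(\<lambda>k. D k *v X k) \<longlonglongrightarrow> D0 *v x"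
    and "pos_vec (D0 *v x)"
  shows "(\<lambda>k. cw_r (C k) (D k) (X k)) \<longlonglongrightarrow> cw_r C0 D0 x"
proof -
  have "(D0 *v x) $ i \<noteq> 0" for i using assms(9) by (metis pos_vec_def less_irrefl)
  then show ?thesis
    unfolding order_tendsto_iff
    by (auto intro: eventually_less_cw_r[OF assms(1-8)] eventually_cw_r_less[OF assms(1-8)])
qed

lemma pos_vec_approximation:
  fixes x :: "real^'n"
  assumes "nonneg_vec x"
  obtains X where "\<And>k. pos_vec (X k)" "X \<longlonglongrightarrow> x"
proof
  let ?X = "\<lambda>k. x + inverse (real (Suc k)) *\<^sub>R 1"
  show "pos_vec (?X k)" for k
    using assms by (auto simp: pos_vec_def nonneg_vec_def add_nonneg_pos)
  have "?X \<longlonglongrightarrow> x + 0 *\<^sub>R 1"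
    by (intro tendsto_intros LIMSEQ_inverse_real_of_nat)
  then show "?X \<longlonglongrightarrow> x" by simp
qed

lemma cw_rho_le_cw_r: "pos_vec x \<Longrightarrow> cw_rho C D \<le> cw_r C D x"
  unfolding cw_rho_def by (rule INF_lower) auto

lemma cw_rho_hat_le_cw_r: "nonneg_vec x \<Longrightarrow> x \<noteq> 0 \<Longrightarrow> cw_rho_hat C D \<le> cw_r C D x"
  unfolding cw_rho_hat_def by (rule INF_lower) auto

lemma cw_rho_hat_le_cw_rho: "cw_rho_hat C D \<le> cw_rho C D"
  unfolding cw_rho_hat_def cw_rho_def
  by (rule INF_superset_mono) (auto dest: pos_vec_nonzero intro: pos_vec_imp_nonneg_vec)

lemma cw_rho_nonneg: "nonneg_mat C \<Longrightarrow> cw_rho C D \<ge> 0"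
  unfolding cw_rho_def by (auto intro!: INF_greatest cw_r_nonneg pos_vec_imp_nonneg_vec)

text \<open>Approximating \<open>x\<close> by positive vectors only raises the quotient in the limit where
  \<open>D x\<close> has a vanishing entry, and then \<open>C x > 0\<close> already makes the quotient infinite.\<close>

lemma cw_rho_le_cw_r_nonneg:
  assumes C: "nonneg_mat C" and D: "nonneg_mat D" and x: "nonneg_vec x"
    and "pos_vec (C *v x) \<or> pos_vec (D *v x)"
  shows "cw_rho C D \<le> cw_r C D x"
proof (cases "pos_vec (D *v x)")
  case True
  obtain X where X: "\<And>k. pos_vec (X k)" "X \<longlonglongrightarrow> x" using pos_vec_approximation[OF x] by blast
  have "(\<lambda>k. cw_r C D (X k)) \<longlonglongrightarrow> cw_r C D x"
    using C D x True X
    by (intro tendsto_cw_r[where C="\<lambda>_. C" and D="\<lambda>_. D"] tendsto_matrix_vector_mult)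
       (auto simp: pos_vec_imp_nonneg_vec)
  then show ?thesis by (rule LIMSEQ_le_const) (auto intro: cw_rho_le_cw_r X)
next
  case False
  then have "cw_r C D x = \<infinity>" using assms cw_r_eq_infinity by blast
  then show ?thesis by simp
qed

lemma weakly_optimal_imp_optimal:
  fixes C D :: "real^'n^'m"
  assumes C: "nonneg_mat C" and D: "nonneg_mat D"
    and wo: "weakly_optimal C D y" and pos: "pos_vec (C *v y) \<or> pos_vec (D *v y)"
  shows "cw_rho C D = cw_rho_hat C D" and "optimal C D y"
proof -
  have y: "nonneg_vec y" "y \<noteq> 0" and ry: "cw_r C D y = cw_rho_hat C D"
    using wo by (auto simp: weakly_optimal_def)
  show eq: "cw_rho C D = cw_rho_hat C D"
    using cw_rho_le_cw_r_nonneg[OF C D y(1) pos] cw_rho_hat_le_cw_rho[of C D] ry by simp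
  obtain Y where Y: "\<And>k. pos_vec (Y k)" "Y \<longlonglongrightarrow> y" using pos_vec_approximation[OF y(1)] by blast
  have "(\<lambda>k. cw_r C D (Y k)) \<longlonglongrightarrow> cw_rho C D"
  proof (cases "pos_vec (D *v y)")
    case True
    have "(\<lambda>k. cw_r C D (Y k)) \<longlonglongrightarrow> cw_r C D y"
      using C D y True Y
      by (intro tendsto_cw_r[where C="\<lambda>_. C" and D="\<lambda>_. D"] tendsto_matrix_vector_mult)
         (auto simp: pos_vec_imp_nonneg_vec)
    then show ?thesis using eq ry by simp
  next
    case False
    then have "cw_rho C D = \<infinity>" using cw_r_eq_infinity[OF D y(1)] pos eq ry by simp
    moreover have "cw_r C D (Y k) = \<infinity>" for k
      using cw_rho_le_cw_r[OF Y(1), of C D k] calculation by simp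
    ultimately show ?thesis by simp
  qed
  then show "optimal C D y" using eq ry y Y by (auto simp: optimal_def)
qed

lemma pos_mat_imp_cw_rho_eq_cw_rho_hat:
  fixes C D :: "real^'n^'m"
  assumes C: "nonneg_mat C" and D: "nonneg_mat D" and pos: "pos_mat C \<or> pos_mat D"
  shows "cw_rho C D = cw_rho_hat C D" and "weakly_optimal C D y \<Longrightarrow> optimal C D y"
proof -
  have pos_mult: "pos_vec (C *v x) \<or> pos_vec (D *v x)" if "nonneg_vec x" "x \<noteq> 0" for x
    using pos_mat_mult_pos_vec[OF _ that] pos by blast
  have "cw_rho C D \<le> cw_rho_hat C D"
    unfolding cw_rho_hat_def
    by (rule INF_greatest) (use cw_rho_le_cw_r_nonneg[OF C D] pos_mult in blast)
  then show "cw_rho C D = cw_rho_hat C D" using cw_rho_hat_le_cw_rho[of C D] by simp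
  show "optimal C D y" if "weakly_optimal C D y"
    using weakly_optimal_imp_optimal[OF C D that] pos_mult that
    by (auto simp: weakly_optimal_def)
qed

lemma cw_rho_hat_less_imp_unit_vector:
  assumes "cw_rho_hat C D < t"
  obtains z where "nonneg_vec z" "norm z = 1" "cw_r C D z < t"
proof -
  obtain x where x: "nonneg_vec x" "x \<noteq> 0" "cw_r C D x < t"
    using assms unfolding cw_rho_hat_def by (auto simp: INF_less_iff)
  let ?z = "inverse (norm x) *\<^sub>R x"
  have "nonneg_vec ?z" using x(1) by (simp add: nonneg_vec_def)
  moreover have "norm ?z = 1" using x(2) by simp
  moreover have "cw_r C D ?z < t" using x by (simp add: cw_r_scaleR)
  ultimately show ?thesis using that by blast
qed

text \<open>By compactness of the nonnegative part of the unit sphere, a vector witnessing a small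
  value of \<open>cw_rho_hat\<close> along a subsequence has a limit point, where lower semicontinuity of
  \<open>cw_r\<close> gives a contradiction.\<close>

lemma eventually_less_cw_rho_hat:
  fixes C D :: "nat \<Rightarrow> real^'n^'m"
  assumes C: "\<And>k. nonneg_mat (C k)" and D: "\<And>k. nonneg_mat (D k)"
    and C0: "nonneg_mat C0" and D0: "nonneg_mat D0"
    and C_lim: "C \<longlonglongrightarrow> C0" and D_lim: "D \<longlonglongrightarrow> D0" and lo: "lo < cw_rho_hat C0 D0"
  shows "\<forall>\<^sub>F k in sequentially. lo < cw_rho_hat (C k) (D k)"
proof (rule ccontr)
  assume not: "\<not> ?thesis"
  obtain r :: "nat \<Rightarrow> nat" where r: "strict_mono r" and "\<And>k. \<not> lo < cw_rho_hat (C (r k)) (D (r k))"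
    using not_eventually_sequentiallyD[OF not] by blast
  then have le: "\<And>k. cw_rho_hat (C (r k)) (D (r k)) \<le> lo" by (simp add: not_less)
  obtain t where t: "lo < ereal t" "ereal t < cw_rho_hat C0 D0" using ereal_dense2[OF lo] by blast
  have "\<exists>z. nonneg_vec z \<and> norm z = 1 \<and> cw_r (C (r k)) (D (r k)) z < t" for k
    using cw_rho_hat_less_imp_unit_vector[OF order_le_less_trans[OF le t(1)]] by blast
  then obtain Z where Z: "\<And>k. nonneg_vec (Z k)" "\<And>k. norm (Z k) = 1"
      "\<And>k. cw_r (C (r k)) (D (r k)) (Z k) < t"
    by metis
  have "bounded (range Z)" using Z(2) by (auto simp: bounded_iff)
  then obtain q z where q: "strict_mono q" and "(Z \<circ> q) \<longlonglongrightarrow> z"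
    using bounded_imp_convergent_subsequence by blast
  then have Z_lim: "(\<lambda>k. Z (q k)) \<longlonglongrightarrow> z" by (simp add: o_def)
  have "nonneg_vec z" unfolding nonneg_vec_def
    using Z(1) by (auto simp: nonneg_vec_def intro: LIMSEQ_le_const[OF tendsto_vec_nth[OF Z_lim]])
  moreover have "norm z = 1"
    using LIMSEQ_unique[OF tendsto_norm[OF Z_lim]] Z(2) by simp
  ultimately have "ereal t < cw_r C0 D0 z"
    using t(2) cw_rho_hat_le_cw_r[of z C0 D0] by fastforce
  moreover have "(\<lambda>k. C (r (q k))) \<longlonglongrightarrow> C0" "(\<lambda>k. D (r (q k))) \<longlonglongrightarrow> D0"
    using LIMSEQ_subseq_LIMSEQ[OF C_lim strict_mono_o[OF r q]]
      LIMSEQ_subseq_LIMSEQ[OF D_lim strict_mono_o[OF r q]] by (simp_all add: o_def)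
  note CZ_lim = tendsto_matrix_vector_mult[OF this(1) Z_lim]
    and DZ_lim = tendsto_matrix_vector_mult[OF this(2) Z_lim]
  ultimately have "\<forall>\<^sub>F k in sequentially. ereal t < cw_r (C (r (q k))) (D (r (q k))) (Z (q k))"
    using C D Z(1) C0 D0 \<open>nonneg_vec z\<close> by (intro eventually_less_cw_r[OF _ _ _ _ _ _ CZ_lim DZ_lim])
  then obtain k where "ereal t < cw_r (C (r (q k))) (D (r (q k))) (Z (q k))"
    using eventually_sequentially by auto
  then show False using Z(3)[of "q k"] by simp
qed

lemma eventually_scaled_le_matrix:
  fixes C :: "nat \<Rightarrow> real^'n^'m"
  assumes "\<And>k. nonneg_mat (C k)" "nonneg_mat C0" "C \<longlonglongrightarrow> C0" "c < 1"
  shows "\<forall>\<^sub>F k in sequentially. \<forall>i j. c * C0 $ i $ j \<le> C k $ i $ j"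
proof (intro eventually_all_finite)
  fix i j
  show "\<forall>\<^sub>F k in sequentially. c * C0 $ i $ j \<le> C k $ i $ j"
  proof (cases "C0 $ i $ j = 0")
    case True
    then show ?thesis using assms(1) by (simp add: nonneg_mat_def)
  next
    case False
    then have "0 < C0 $ i $ j" using assms(2) by (simp add: nonneg_mat_def order_le_neq_trans)
    then have "c * C0 $ i $ j < C0 $ i $ j" using assms(4) by simp
    from order_tendstoD(1)[OF tendsto_vec_nth[OF tendsto_vec_nth[OF assms(3)]] this]
    show ?thesis by (rule eventually_mono) simp
  qed
qed

text \<open>Entrywise \<open>(s / t) C0 \<le> C k\<close> eventually, and \<open>cw_r\<close> is monotone and homogeneous in its
  first argument.\<close>

lemma eventually_less_cw_rho_left:
  fixes C :: "nat \<Rightarrow> real^'n^'m"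
  assumes C: "\<And>k. nonneg_mat (C k)" and C0: "nonneg_mat C0" and C_lim: "C \<longlonglongrightarrow> C0"
    and lo: "lo < cw_rho C0 D"
  shows "\<forall>\<^sub>F k in sequentially. lo < cw_rho (C k) D"
proof (cases "lo < 0")
  case True
  then show ?thesis by (intro always_eventually allI less_le_trans[OF True cw_rho_nonneg[OF C]])
next
  case False
  obtain s where s: "lo < ereal s" "ereal s < cw_rho C0 D" using ereal_dense2[OF lo] by blast
  obtain t where t: "s < t" "ereal t < cw_rho C0 D" using ereal_dense2[OF s(2)] by auto
  have "0 < ereal s" using order_le_less_trans[of 0 lo "ereal s"] False s(1) by simp
  then have "0 < s" "0 < t" "0 < s / t" "s / t < 1" using t(1) by auto
  from eventually_scaled_le_matrix[OF C C0 C_lim \<open>s / t < 1\<close>] show ?thesis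
  proof eventually_elim
    case (elim k)
    have "ereal s \<le> cw_r (C k) D x" if x: "pos_vec x" for x
    proof -
      have "ereal s = ereal (s / t) * ereal t" using t(1) \<open>0 < s\<close> by simp
      also have "\<dots> \<le> ereal (s / t) * cw_r C0 D x"
        using \<open>0 < s / t\<close>
        by (intro ereal_mult_left_mono order_trans[OF less_imp_le[OF t(2)] cw_rho_le_cw_r[OF x]])
          simp
      also have "\<dots> = cw_r ((s / t) *\<^sub>R C0) D x" by (simp add: cw_r_scaleR_left \<open>0 < s / t\<close>)
      also have "\<dots> \<le> cw_r (C k) D x"
        using elim C0 \<open>0 < s\<close> \<open>0 < t\<close> x
        by (intro cw_r_mono_left) (auto simp: nonneg_mat_def pos_vec_imp_nonneg_vec)
      finally show ?thesis .
    qed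
    then have "ereal s \<le> cw_rho (C k) D" unfolding cw_rho_def by (auto intro: INF_greatest)
    then show ?case using s(1) by simp
  qed
qed

lemma tendsto_cw_rho_pos_right:
  fixes A B :: "real^'n^'m" and Bl :: "nat \<Rightarrow> real^'n^'m"
  assumes A: "nonneg_mat A" and B: "nonneg_mat B" and pos: "\<And>l. pos_mat (Bl l)"
    and lim: "Bl \<longlonglongrightarrow> B"
  shows "(\<lambda>l. cw_rho A (Bl l)) \<longlonglongrightarrow> cw_rho_hat A B"
  unfolding order_tendsto_iff
proof safe
  fix lo assume "lo < cw_rho_hat A B"
  with A B pos lim have "\<forall>\<^sub>F l in sequentially. lo < cw_rho_hat A (Bl l)"
    by (intro eventually_less_cw_rho_hat[where C="\<lambda>_. A"]) (auto intro: pos_mat_imp_nonneg_mat)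
  then show "\<forall>\<^sub>F l in sequentially. lo < cw_rho A (Bl l)"
    by (rule eventually_mono) (meson cw_rho_hat_le_cw_rho less_le_trans)
next
  fix u assume "cw_rho_hat A B < u"
  then obtain x where x: "nonneg_vec x" "x \<noteq> 0" "cw_r A B x < u"
    unfolding cw_rho_hat_def by (auto simp: INF_less_iff)
  have "(\<lambda>l. Bl l *v x) \<longlonglongrightarrow> B *v x"
    using tendsto_matrix_vector_mult[OF lim tendsto_const] .
  then have ev: "\<forall>\<^sub>F l in sequentially. cw_r A (Bl l) x < u"
    using A B pos x
    by (intro eventually_cw_r_less[where C="\<lambda>_. A" and X="\<lambda>_. x"] tendsto_const)
       (auto intro: pos_mat_imp_nonneg_mat)
  have le: "cw_rho A (Bl l) \<le> cw_r A (Bl l) x" for l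
    using A pos x by (intro cw_rho_le_cw_r_nonneg)
      (auto intro: pos_mat_imp_nonneg_mat pos_mat_mult_pos_vec)
  show "\<forall>\<^sub>F l in sequentially. cw_rho A (Bl l) < u"
    using ev by (rule eventually_mono) (rule le_less_trans[OF le])
qed

lemma tendsto_cw_rho_pos_left:
  fixes A B :: "real^'n^'m" and Al :: "nat \<Rightarrow> real^'n^'m"
  assumes A: "nonneg_mat A" and B: "nonneg_mat B" and pos: "\<And>l. pos_mat (Al l)"
    and lim: "Al \<longlonglongrightarrow> A" and rows: "\<And>i. \<exists>j. B $ i $ j \<noteq> 0"
  shows "(\<lambda>l. cw_rho (Al l) B) \<longlonglongrightarrow> cw_rho A B"
  unfolding order_tendsto_iff
proof safe
  fix lo assume "lo < cw_rho A B"
  then show "\<forall>\<^sub>F l in sequentially. lo < cw_rho (Al l) B"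
    using eventually_less_cw_rho_left[OF _ A lim] pos pos_mat_imp_nonneg_mat by blast
next
  fix u assume "cw_rho A B < u"
  then obtain x where x: "pos_vec x" "cw_r A B x < u"
    unfolding cw_rho_def by (auto simp: INF_less_iff)
  have "\<exists>j. 0 < B $ i $ j \<and> 0 < x $ j" for i
  proof -
    obtain j where "B $ i $ j \<noteq> 0" using rows by blast
    then show ?thesis
      using B x(1) by (intro exI[of _ j]) (auto simp: nonneg_mat_def pos_vec_def order_le_neq_trans)
  qed
  then have "pos_vec (B *v x)"
    using B x(1) by (intro pos_vec_matrix_vector_mult) (auto simp: pos_vec_imp_nonneg_vec)
  then have "(\<lambda>l. cw_r (Al l) B x) \<longlonglongrightarrow> cw_r A B x"
    using A B pos x(1)
    by (intro tendsto_cw_r[where D="\<lambda>_. B" and X="\<lambda>_. x"]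
        tendsto_matrix_vector_mult[OF lim tendsto_const] tendsto_const)
       (auto intro: pos_mat_imp_nonneg_mat pos_vec_imp_nonneg_vec)
  from order_tendstoD(2)[OF this x(2)] show "\<forall>\<^sub>F l in sequentially. cw_rho (Al l) B < u"
    by (rule eventually_mono) (meson cw_rho_le_cw_r x(1) le_less_trans)
qed

theorem lemma2p5:
  fixes A B :: "real^'n^'m"
  assumes "nonneg_mat A" and "nonneg_mat B"
  shows "cw_rho_hat A B \<le> cw_rho A B
    \<and> (\<forall>y. weakly_optimal A B y \<and> (pos_vec (A *v y) \<or> pos_vec (B *v y)) \<longrightarrow>
           cw_rho A B = cw_rho_hat A B \<and> optimal A B y)
    \<and> (pos_mat A \<or> pos_mat B \<longrightarrow>
           cw_rho A B = cw_rho_hat A B \<and> (\<forall>y. weakly_optimal A B y \<longrightarrow> optimal A B y))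
    \<and> (\<forall>Bl :: nat \<Rightarrow> real^'n^'m. (\<forall>l. pos_mat (Bl l)) \<and> Bl \<longlonglongrightarrow> B \<longrightarrow>
           (\<lambda>l. cw_rho A (Bl l)) \<longlonglongrightarrow> cw_rho_hat A B)
    \<and> (\<forall>Al :: nat \<Rightarrow> real^'n^'m. (\<forall>l. pos_mat (Al l)) \<and> Al \<longlonglongrightarrow> A \<and>
           (\<forall>i. \<exists>j. B $ i $ j \<noteq> 0) \<longrightarrow>
           (\<lambda>l. cw_rho (Al l) B) \<longlonglongrightarrow> cw_rho A B)"
  using cw_rho_hat_le_cw_rho[of A B]
    weakly_optimal_imp_optimal[OF assms]
    pos_mat_imp_cw_rho_eq_cw_rho_hat[OF assms]
    tendsto_cw_rho_pos_right[OF assms] tendsto_cw_rho_pos_left[OF assms]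
  by blast

end
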